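(* Let $\mathsf{X}=\mathsf{Y}=\{0,1\}$, $\mu=\psi=\mathrm{Bernoulli}(1/2)$ and $\rho(x,y)=1_{\{x\ne y\}}$ (Hamming distortion). Then for every $D\in(0,1/2)$, $$I_0(\mu\|\psi,D)<C_0(\mu\|\psi,D).$$
   Context: $I_0(\mu\|\psi,D):=\min\{\max(I(X;U),I(Y;U)):\ P_X=\mu,\ P_Y=\psi,\ \mathbb{E}[\rho(X,Y)]\le D,\ X-U-Y\text{ Markov},\ |\mathsf{U}|\le|\mathsf{X}|+|\mathsf{Y}|+1\}$ (the minimum coding rate with no common randomness for the output-constrained problem). Wyner's common information of a joint law $P_{X,Y}$ is $C(X;Y):=\inf\{I(X,Y;U): X-U-Y\text{ Markov}, U \text{ finite-valued}\}$, and $C_0(\mu\|\psi,D):=\min\{C(X;Y): P_X=\mu,\ P_Y=\psi,\ \mathbb{E}[\rho(X,Y)]\le D\}$. *)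

theory Defs
  imports Complex_Main
begin

text \<open>Joint laws of (U,X,Y) with U taking values in nat (any finite alphabet
embeds in nat), X :: 'x, Y :: 'y finite types. A law is a function
p u x y = P(U=u, X=x, Y=y).\<close>

definition usupp :: "(nat \<Rightarrow> 'x::finite \<Rightarrow> 'y::finite \<Rightarrow> real) \<Rightarrow> nat set" where
  "usupp p = {u. \<exists>x y. p u x y \<noteq> 0}"

definition is_law3 :: "(nat \<Rightarrow> 'x::finite \<Rightarrow> 'y::finite \<Rightarrow> real) \<Rightarrow> bool" where
  "is_law3 p \<longleftrightarrow> (\<forall>u x y. 0 \<le> p u x y) \<and> finite (usupp p) \<and>
     (\<Sum>u\<in>usupp p. \<Sum>x\<in>UNIV. \<Sum>y\<in>UNIV. p u x y) = 1"

definition marg_X :: "(nat \<Rightarrow> 'x::finite \<Rightarrow> 'y::finite \<Rightarrow> real) \<Rightarrow> 'x \<Rightarrow> real" where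
  "marg_X p x = (\<Sum>u\<in>usupp p. \<Sum>y\<in>UNIV. p u x y)"

definition marg_Y :: "(nat \<Rightarrow> 'x::finite \<Rightarrow> 'y::finite \<Rightarrow> real) \<Rightarrow> 'y \<Rightarrow> real" where
  "marg_Y p y = (\<Sum>u\<in>usupp p. \<Sum>x\<in>UNIV. p u x y)"

definition marg_XY :: "(nat \<Rightarrow> 'x::finite \<Rightarrow> 'y::finite \<Rightarrow> real) \<Rightarrow> 'x \<Rightarrow> 'y \<Rightarrow> real" where
  "marg_XY p x y = (\<Sum>u\<in>usupp p. p u x y)"

text \<open>Markov chain X - U - Y: P(x,y|u) = P(x|u) P(y|u), multiplied out by P(u)^2.\<close>
definition markov_XUY :: "(nat \<Rightarrow> 'x::finite \<Rightarrow> 'y::finite \<Rightarrow> real) \<Rightarrow> bool" where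
  "markov_XUY p \<longleftrightarrow> (\<forall>u x y.
     p u x y * (\<Sum>x'\<in>UNIV. \<Sum>y'\<in>UNIV. p u x' y') =
     (\<Sum>y'\<in>UNIV. p u x y') * (\<Sum>x'\<in>UNIV. p u x' y))"

definition mutual_info :: "'a set \<Rightarrow> 'b set \<Rightarrow> ('a \<Rightarrow> 'b \<Rightarrow> real) \<Rightarrow> real" where
  "mutual_info A B q = (\<Sum>a\<in>A. \<Sum>b\<in>B.
     if q a b > 0 then q a b * log 2 (q a b / ((\<Sum>b'\<in>B. q a b') * (\<Sum>a'\<in>A. q a' b)))
     else 0)"

definition MI_XU :: "(nat \<Rightarrow> 'x::finite \<Rightarrow> 'y::finite \<Rightarrow> real) \<Rightarrow> real" where
  "MI_XU p = mutual_info (usupp p) (UNIV :: 'x set) (\<lambda>u x. \<Sum>y\<in>UNIV. p u x y)"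

definition MI_YU :: "(nat \<Rightarrow> 'x::finite \<Rightarrow> 'y::finite \<Rightarrow> real) \<Rightarrow> real" where
  "MI_YU p = mutual_info (usupp p) (UNIV :: 'y set) (\<lambda>u y. \<Sum>x\<in>UNIV. p u x y)"

definition MI_XYU :: "(nat \<Rightarrow> 'x::finite \<Rightarrow> 'y::finite \<Rightarrow> real) \<Rightarrow> real" where
  "MI_XYU p = mutual_info (usupp p) (UNIV :: ('x \<times> 'y) set) (\<lambda>u (x, y). p u x y)"

definition exp_dist :: "('x::finite \<Rightarrow> 'y::finite \<Rightarrow> real) \<Rightarrow> ('x \<Rightarrow> 'y \<Rightarrow> real) \<Rightarrow> real" where
  "exp_dist \<rho> P = (\<Sum>x\<in>UNIV. \<Sum>y\<in>UNIV. P x y * \<rho> x y)"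

definition coupling :: "('x::finite \<Rightarrow> real) \<Rightarrow> ('y::finite \<Rightarrow> real) \<Rightarrow> ('x \<Rightarrow> 'y \<Rightarrow> real) \<Rightarrow> bool" where
  "coupling \<mu> \<psi> P \<longleftrightarrow> (\<forall>x y. 0 \<le> P x y) \<and>
     (\<forall>x. (\<Sum>y\<in>UNIV. P x y) = \<mu> x) \<and> (\<forall>y. (\<Sum>x\<in>UNIV. P x y) = \<psi> y)"

text \<open>I_0(mu||psi,D): minimum (attained; written as Inf) of max(I(X;U),I(Y;U)).\<close>
definition I0 :: "('x::finite \<Rightarrow> real) \<Rightarrow> ('y::finite \<Rightarrow> real) \<Rightarrow> ('x \<Rightarrow> 'y \<Rightarrow> real) \<Rightarrow> real \<Rightarrow> real" where
  "I0 \<mu> \<psi> \<rho> D = Inf {max (MI_XU p) (MI_YU p) | p.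
     is_law3 p \<and> coupling \<mu> \<psi> (marg_XY p) \<and> exp_dist \<rho> (marg_XY p) \<le> D \<and>
     markov_XUY p \<and> card (usupp p) \<le> card (UNIV :: 'x set) + card (UNIV :: 'y set) + 1}"

definition wyner_CI :: "('x::finite \<Rightarrow> 'y::finite \<Rightarrow> real) \<Rightarrow> real" where
  "wyner_CI P = Inf {MI_XYU p | p. is_law3 p \<and> marg_XY p = P \<and> markov_XUY p}"

definition C0 :: "('x::finite \<Rightarrow> real) \<Rightarrow> ('y::finite \<Rightarrow> real) \<Rightarrow> ('x \<Rightarrow> 'y \<Rightarrow> real) \<Rightarrow> real \<Rightarrow> real" where
  "C0 \<mu> \<psi> \<rho> D = Inf {wyner_CI P | P. coupling \<mu> \<psi> P \<and> exp_dist \<rho> P \<le> D}"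

end

theory Submission
  imports Defs "HOL-Analysis.Analysis" "HOL-Real_Asymp.Real_Asymp"
begin

text \<open>Achievability: let \<open>U\<close> be a fair bit seen by \<open>X\<close> and \<open>Y\<close> through independent binary
  symmetric channels with crossover \<open>a\<close>, where \<open>2a(1 - a) = D\<close>; then
  \<open>I(X;U) = I(Y;U) = 1 - h(a)\<close> bits.

  Converse for Wyner's common information: for a coupling of fair bits with \<open>P(X \<noteq> Y) = d \<le> D\<close>
  and any \<open>X - U - Y\<close>, \<open>I(X,Y;U) = 1 + h(d) - E[h(\<alpha>\<^sub>U) + h(\<beta>\<^sub>U)]\<close>, where \<open>\<alpha>\<^sub>u, \<beta>\<^sub>u\<close> are
  the conditional laws of \<open>X\<close> and \<open>Y\<close>. In the correlation variables \<open>1 - 2\<alpha>, 1 - 2\<beta>\<close>, concavity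
  of \<open>u \<mapsto> h((1 - e\<^sup>-\<^sup>u)/2)\<close> (the core of Mrs. Gerber's lemma) yields the pointwise bound
  \<open>h(\<alpha>) + h(\<beta>) \<le> 2h(a) + \<lambda>(P(X \<noteq> Y | U = u) - D)\<close>, with \<open>\<lambda>\<close> the slope of \<open>D \<mapsto> 2h(a)\<close>.
  Averaging over \<open>U\<close>, \<open>I(X,Y;U) \<ge> 1 + h(d) + \<lambda>(D - d) - 2h(a) \<ge> 1 + min(\<lambda>D, h(D)) - 2h(a)\<close>, and
  both \<open>\<lambda>D\<close> and \<open>h(D)\<close> exceed \<open>h(a)\<close>.\<close>

lemma concave_on_Icc_if_concave_on_interior:
  fixes f :: "real \<Rightarrow> real"
  assumes cont: "continuous_on {a..b} f" and conc: "concave_on {a<..<b} f"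
  shows "concave_on {a..b} f"
proof (rule concave_on_linorderI)
  fix t x y :: real
  assume t: "0 < t" "t < 1" and xy: "x \<in> {a..b}" "y \<in> {a..b}" "x < y"
  define z where "z = (1 - t) * x + t * y"
  have z: "x < z" "z < y"
    using t xy mult_strict_left_mono[of x y t] mult_strict_left_mono[of x y "1 - t"]
    by (auto simp: z_def algebra_simps)
  \<comment> \<open>Shrink the chord towards z: its endpoints then lie in the open interval.\<close>
  define g where "g e = (1 - t) * f (x + e * (z - x)) + t * f (y + e * (z - y))" for e
  have "(1 - t) * (x + e * (z - x)) + t * (y + e * (z - y)) = z" for e
    by (simp add: z_def algebra_simps)
  moreover have "x + e * (z - x) \<in> {a<..<b}" "y + e * (z - y) \<in> {a<..<b}" if "0 < e" "e < 1" for e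
  proof -
    have "0 < e * (z - x)" "e * (z - x) < z - x" "0 < e * (y - z)" "e * (y - z) < y - z"
      using that z by simp_all
    then show "x + e * (z - x) \<in> {a<..<b}" "y + e * (z - y) \<in> {a<..<b}"
      using xy z by (auto simp: algebra_simps)
  qed
  ultimately have g_le: "g e \<le> f z" if "0 < e" "e < 1" for e
    using concave_onD[OF conc, of t "x + e * (z - x)" "y + e * (z - y)"] t that
    by (simp add: g_def)
  have "x + e * (z - x) \<in> {a..b}" "y + e * (z - y) \<in> {a..b}" if "e \<in> {0..1}" for e
  proof -
    have "0 \<le> e * (z - x)" "e * (z - x) \<le> z - x" "0 \<le> e * (y - z)" "e * (y - z) \<le> y - z"
      using that z by (simp_all add: mult_left_le_one_le)
    then show "x + e * (z - x) \<in> {a..b}" "y + e * (z - y) \<in> {a..b}"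
      using xy z by (auto simp: algebra_simps)
  qed
  then have "continuous_on {0..1} g"
    unfolding g_def
    by (intro continuous_intros continuous_on_compose2[OF cont]) auto
  then have "(g \<longlongrightarrow> g 0) (at_right 0)"
    by (auto simp: continuous_on_Icc_at_rightD)
  moreover have "\<forall>\<^sub>F e in at_right 0. g e \<le> f z"
    unfolding eventually_at_right_field by (auto intro!: exI[of _ 1] g_le)
  ultimately have "g 0 \<le> f z"
    by (rule tendsto_upperbound) simp
  then show "(1 - t) * f x + t * f y \<le> f ((1 - t) *\<^sub>R x + t *\<^sub>R y)"
    by (simp add: g_def z_def)
qed auto

section \<open>Binary entropy\<close>

text \<open>In nats; the mutual informations of the definitions are in bits, whence the factors
  \<open>1 / ln 2\<close> below.\<close>
definition bin_entropy :: "real \<Rightarrow> real" where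
  "bin_entropy p = - (p * ln p) - (1 - p) * ln (1 - p)"

lemma bin_entropy_one_minus: "bin_entropy (1 - p) = bin_entropy p"
  unfolding bin_entropy_def by simp

lemma bin_entropy_0 [simp]: "bin_entropy 0 = 0"
  unfolding bin_entropy_def by simp

lemma bin_entropy_half: "bin_entropy (1/2) = ln 2"
  unfolding bin_entropy_def by (simp add: ln_div)

lemma continuous_on_bin_entropy: "continuous_on {0..1} bin_entropy"
proof (rule continuous_on_IccI)
  show "(bin_entropy \<longlongrightarrow> bin_entropy 0) (at_right 0)"
    "(bin_entropy \<longlongrightarrow> bin_entropy 1) (at_left 1)"
    unfolding bin_entropy_def by real_asymp+
  show "bin_entropy \<midarrow>x\<rightarrow> bin_entropy x" if "0 < x" "x < 1" for x
    using that unfolding bin_entropy_def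
    by (intro continuous_intros tendsto_intros isCont_tendsto_compose[OF isCont_ln]) auto
qed simp

lemma bin_entropy_has_real_derivative:
  assumes "0 < p" "p < 1"
  shows "(bin_entropy has_real_derivative ln (1 - p) - ln p) (at p)"
proof -
  have "((\<lambda>p. - (p * ln p) - (1 - p) * ln (1 - p)) has_real_derivative
      - (ln p + 1) + (ln (1 - p) + 1)) (at p)"
    using assms by (auto intro!: derivative_eq_intros)
  then show ?thesis
    by (simp add: bin_entropy_def[abs_def])
qed

lemma concave_on_bin_entropy: "concave_on {0..1} bin_entropy"
proof (rule concave_on_Icc_if_concave_on_interior[OF continuous_on_bin_entropy])
  show "concave_on {0<..<1} bin_entropy"
    unfolding concave_on_def
  proof (rule convex_on_realI[where f' = "\<lambda>p. ln p - ln (1 - p)"])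
    show "((\<lambda>x. - bin_entropy x) has_real_derivative ln x - ln (1 - x)) (at x)"
      if "x \<in> {0<..<1}" for x
      using bin_entropy_has_real_derivative[of x] that DERIV_minus by fastforce
  qed (auto intro: diff_mono)
qed

lemma bin_entropy_le_ln2:
  assumes "0 \<le> p" "p \<le> 1"
  shows "bin_entropy p \<le> ln 2"
proof -
  have "(1 - 1/2) * bin_entropy p + 1/2 * bin_entropy (1 - p)
      \<le> bin_entropy ((1 - 1/2) *\<^sub>R p + (1/2) *\<^sub>R (1 - p))"
    using assms by (intro concave_onD[OF concave_on_bin_entropy]) auto
  then show ?thesis
    by (simp add: bin_entropy_one_minus bin_entropy_half[symmetric] field_simps)
qed

lemma bin_entropy_strict_mono:
  assumes "0 \<le> x" "x < y" "y \<le> 1/2"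
  shows "bin_entropy x < bin_entropy y"
proof (rule DERIV_pos_imp_increasing_open[OF \<open>x < y\<close>])
  show "\<exists>d. (bin_entropy has_real_derivative d) (at z) \<and> 0 < d" if "x < z" "z < y" for z
    using that assms bin_entropy_has_real_derivative[of z] by (intro exI) auto
  show "continuous_on {x..y} bin_entropy"
    using assms by (auto intro: continuous_on_subset[OF continuous_on_bin_entropy])
qed

lemma bin_entropy_add_linear_ge_min:
  assumes "0 \<le> d" "d \<le> D" "D \<le> 1"
  shows "min (c * D) (bin_entropy D) \<le> bin_entropy d + c * (D - d)"
proof (cases "D = 0")
  case False
  define t where "t = d / D"
  have t: "0 \<le> t" "t \<le> 1" "d = t * D"
    using assms False by (simp_all add: t_def)
  have "(1 - t) * bin_entropy 0 + t * bin_entropy D \<le> bin_entropy ((1 - t) *\<^sub>R 0 + t *\<^sub>R D)"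
    using assms t by (intro concave_onD[OF concave_on_bin_entropy]) auto
  then have "t * bin_entropy D + (1 - t) * (c * D) \<le> bin_entropy d + c * (D - d)"
    using t by (simp add: algebra_simps)
  moreover have "t * min (c * D) (bin_entropy D) \<le> t * bin_entropy D"
    "(1 - t) * min (c * D) (bin_entropy D) \<le> (1 - t) * (c * D)"
    using t by (simp_all add: mult_left_mono)
  ultimately show ?thesis
    by (simp add: algebra_simps)
qed (use assms in simp)

lemma concave_on_xlnx_reflection_diff:
  "concave_on {0..1/2} (\<lambda>a. (1 - a) * ln (1 - a) - a * ln a)"
proof (rule concave_on_Icc_if_concave_on_interior)
  show "continuous_on {0..1/2} (\<lambda>a::real. (1 - a) * ln (1 - a) - a * ln a)"
  proof (rule continuous_on_IccI)
    show "((\<lambda>a::real. (1 - a) * ln (1 - a) - a * ln a)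
        \<longlongrightarrow> (1 - 0) * ln (1 - 0) - 0 * ln 0) (at_right 0)"
      by real_asymp
  qed (auto intro!: tendsto_eq_intros)
  show "concave_on {0<..<1/2} (\<lambda>a::real. (1 - a) * ln (1 - a) - a * ln a)"
    unfolding concave_on_def
  proof (rule convex_on_realI[where f' = "\<lambda>a. ln a + ln (1 - a) + 2"])
    show "((\<lambda>a. - ((1 - a) * ln (1 - a) - a * ln a)) has_real_derivative ln x + ln (1 - x) + 2) (at x)"
      if "x \<in> {0<..<1/2}" for x
    proof -
      have "((\<lambda>a. - ((1 - a) * ln (1 - a) - a * ln a)) has_real_derivative
          - (- ln (1 - x) - 1 - (ln x + 1))) (at x)"
        using that by (auto intro!: derivative_eq_intros)
      then show ?thesis by (simp add: algebra_simps)
    qed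
    show "ln x + ln (1 - x) + 2 \<le> ln y + ln (1 - y) + 2"
      if "x \<in> {0<..<1/2}" "y \<in> {0<..<1/2}" "x \<le> y" for x y :: real
    proof -
      have "x * (1 - x) \<le> y * (1 - y)"
        using that mult_left_mono[of x y "1 - x - y"] by (auto simp: algebra_simps)
      then show ?thesis
        using that ln_mono[of "x * (1 - x)" "y * (1 - y)"] by (simp add: ln_mult)
    qed
  qed simp
qed

lemma xlnx_lt_reflection:
  fixes a :: real
  assumes "0 < a" "a < 1/2"
  shows "a * ln a < (1 - a) * ln (1 - a)"
proof -
  define g :: "real \<Rightarrow> real" where "g a = (1 - a) * ln (1 - a) - a * ln a" for a
  have "ln (1/4::real) < ln ((3/4) ^ 3)"
    by (subst ln_less_cancel_iff) (auto simp: power3_eq_cube)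
  then have g_quarter: "0 < g (1/4)"
    by (simp add: g_def ln_realpow)
  have g_ends: "g 0 = 0" "g (1/2) = 0"
    by (simp_all add: g_def)
  note g_conc = concave_onD[OF concave_on_xlnx_reflection_diff[folded g_def]]
  \<comment> \<open>Write a as a convex combination of 1/4 and an endpoint where g vanishes.\<close>
  have "0 < g a"
  proof (cases "a \<le> 1/4")
    case True
    have "(1 - 4 * a) * g 0 + (4 * a) * g (1/4) \<le> g ((1 - 4 * a) *\<^sub>R 0 + (4 * a) *\<^sub>R (1/4))"
      using True assms by (intro g_conc) auto
    then have "4 * a * g (1/4) \<le> g a"
      using g_ends by simp
    moreover have "0 < 4 * a * g (1/4)"
      using g_quarter assms by simp
    ultimately show ?thesis by linarith
  next
    case False
    have "(2 - 4 * a) * g (1/4) + (4 * a - 1) * g (1/2)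
        \<le> g ((2 - 4 * a) *\<^sub>R (1/4) + (4 * a - 1) *\<^sub>R (1/2))"
      using g_conc[of "4 * a - 1" "1/4" "1/2"] False assms by auto
    moreover have "(2 - 4 * a) *\<^sub>R (1/4) + (4 * a - 1) *\<^sub>R (1/2) = a"
      by (simp add: algebra_simps)
    ultimately have "(2 - 4 * a) * g (1/4) \<le> g a"
      using g_ends by simp
    moreover have "0 < (2 - 4 * a) * g (1/4)"
      using g_quarter assms by simp
    ultimately show ?thesis by linarith
  qed
  then show ?thesis
    by (simp add: g_def)
qed

text \<open>The derivative of \<open>2 bin_entropy a\<close> with respect to the distortion \<open>2a(1 - a)\<close>;
  it serves as the Lagrange multiplier of the distortion constraint.\<close>
definition distortion_multiplier :: "real \<Rightarrow> real" where
  "distortion_multiplier a = (ln (1 - a) - ln a) / (1 - 2 * a)"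

lemma bin_entropy_lt_distortion_multiplier:
  assumes "0 < a" "a < 1/2"
  shows "bin_entropy a < distortion_multiplier a * (2 * a * (1 - a))"
proof -
  have "(distortion_multiplier a * (2 * a * (1 - a)) - bin_entropy a) * (1 - 2 * a)
      = (1 - a) * ln (1 - a) - a * ln a"
    using assms unfolding distortion_multiplier_def bin_entropy_def by (simp add: field_simps)
  then have "0 < (distortion_multiplier a * (2 * a * (1 - a)) - bin_entropy a) * (1 - 2 * a)"
    using xlnx_lt_reflection[OF assms] by simp
  then show ?thesis
    using assms by (simp add: zero_less_mult_iff)
qed

lemma bin_entropy_lt_distortion:
  assumes "0 < a" "a < 1/2"
  shows "bin_entropy a < bin_entropy (2 * a * (1 - a))"
proof (rule bin_entropy_strict_mono)
  have "2 * a * (1 - a) - a = a * (1 - 2 * a)" "1/2 - 2 * a * (1 - a) = (1 - 2 * a)^2 / 2"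
    by (simp_all add: algebra_simps power2_eq_square)
  then show "a < 2 * a * (1 - a)" "2 * a * (1 - a) \<le> 1/2"
    using assms by (simp_all add: algebra_simps)
qed (use assms in simp)

section \<open>Mrs. Gerber's inequality\<close>

lemma artanh_mono:
  fixes x y :: real
  assumes "-1 < x" "x \<le> y" "y < 1"
  shows "artanh x \<le> artanh y"
  using assms unfolding artanh_def by (auto intro!: divide_right_mono ln_mono frac_le)

lemma convex_on_artanh: "convex_on {0..<1} (artanh :: real \<Rightarrow> real)"
proof (rule convex_on_realI[where f' = "\<lambda>x. 1 / (1 - x^2)"])
  show "(artanh has_real_derivative 1 / (1 - x^2)) (at x)" if "x \<in> {0..<1}" for x :: real
    using that by (intro artanh_real_has_field_derivative) auto
  show "1 / (1 - x^2) \<le> 1 / (1 - y^2)" if "x \<in> {0..<1}" "y \<in> {0..<1}" "x \<le> y" for x y :: real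
    using that power_mono[of x y 2] by (intro divide_left_mono) (auto simp: abs_square_less_1)
qed simp

lemma artanh_le_chord:
  fixes z s :: real
  assumes "0 \<le> z" "z \<le> s" "s < 1"
  shows "artanh z \<le> z / s * artanh s"
proof (cases "s = 0")
  case False
  have "artanh ((1 - z / s) *\<^sub>R 0 + (z / s) *\<^sub>R s) \<le> (1 - z / s) * artanh 0 + z / s * artanh s"
    using assms False by (intro convex_onD[OF convex_on_artanh]) auto
  then show ?thesis
    using False by simp
qed (use assms in simp)

lemma artanh_ge_chord:
  fixes z s :: real
  assumes "0 < s" "s \<le> z" "z < 1"
  shows "z / s * artanh s \<le> artanh z"
proof -
  have "artanh ((1 - s / z) *\<^sub>R 0 + (s / z) *\<^sub>R z) \<le> (1 - s / z) * artanh 0 + s / z * artanh z"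
    using assms by (intro convex_onD[OF convex_on_artanh]) auto
  then have "artanh s \<le> s / z * artanh z"
    using assms by simp
  then show ?thesis
    using assms by (simp add: field_simps)
qed

text \<open>Binary entropy as a function of the mean \<open>x = 1 - 2p\<close> of a \<open>\<plusminus>1\<close>-valued bit.\<close>
definition corr_entropy :: "real \<Rightarrow> real" where
  "corr_entropy x = bin_entropy ((1 - x) / 2)"

lemma corr_entropy_minus: "corr_entropy (- x) = corr_entropy x"
  using bin_entropy_one_minus[of "(1 - x) / 2"] by (simp add: corr_entropy_def field_simps)

lemma corr_entropy_abs: "corr_entropy \<bar>x\<bar> = corr_entropy x"
  by (cases "0 \<le> x") (auto simp: corr_entropy_minus)

lemma corr_entropy_0: "corr_entropy 0 = ln 2"
  by (simp add: corr_entropy_def bin_entropy_half)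

lemma corr_entropy_le_ln2: "-1 \<le> x \<Longrightarrow> x \<le> 1 \<Longrightarrow> corr_entropy x \<le> ln 2"
  unfolding corr_entropy_def by (intro bin_entropy_le_ln2) auto

lemma continuous_on_corr_entropy: "continuous_on {-1..1} corr_entropy"
  unfolding corr_entropy_def[abs_def]
  by (rule continuous_on_compose2[OF continuous_on_bin_entropy]) (auto intro!: continuous_intros)

lemma corr_entropy_has_real_derivative:
  assumes "-1 < z" "z < 1"
  shows "(corr_entropy has_real_derivative - artanh z) (at z)"
proof -
  have "ln (1 - (1 - z) / 2) - ln ((1 - z) / 2) = 2 * artanh z"
    using assms by (simp add: artanh_def ln_div field_simps)
  then have "(bin_entropy has_real_derivative 2 * artanh z) (at ((1 - z) / 2))"
    using bin_entropy_has_real_derivative[of "(1 - z) / 2"] assms by simp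
  moreover have "((\<lambda>z. (1 - z) / 2) has_real_derivative - 1/2) (at z)"
    by (auto intro!: derivative_eq_intros)
  ultimately have "((\<lambda>z. bin_entropy ((1 - z) / 2)) has_real_derivative 2 * artanh z * (- 1/2)) (at z)"
    by (rule DERIV_chain2)
  then show ?thesis
    by (simp add: corr_entropy_def[abs_def])
qed

text \<open>As a function of \<open>z\<close> the left-hand side has derivative \<open>2 (z artanh s / s - artanh z)\<close>,
  which by convexity of \<open>artanh\<close> is nonnegative below \<open>s\<close> and nonpositive above.\<close>
lemma corr_entropy_quadratic_le:
  assumes s: "0 < s" "s < 1" and z: "0 \<le> z" "z \<le> 1"
  shows "2 * corr_entropy z + artanh s / s * z^2 \<le> 2 * corr_entropy s + artanh s / s * s^2"
proof -
  define L where "L w = 2 * corr_entropy w + artanh s / s * w^2" for w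
  have L_cont: "continuous_on {0..1} L"
    unfolding L_def by (intro continuous_intros continuous_on_subset[OF continuous_on_corr_entropy]) auto
  have L_deriv: "(L has_real_derivative 2 * (w / s * artanh s - artanh w)) (at w)"
    if "0 < w" "w < 1" for w
  proof -
    have "(L has_real_derivative 2 * (- artanh w) + artanh s / s * (2 * w)) (at w)"
      unfolding L_def using that s
      by (auto intro!: derivative_eq_intros corr_entropy_has_real_derivative)
    then show ?thesis
      by (simp add: algebra_simps)
  qed
  have "L z \<le> L s"
  proof (cases "z \<le> s")
    case True
    show ?thesis
    proof (rule DERIV_nonneg_imp_increasing_open[OF True])
      show "\<exists>d. (L has_real_derivative d) (at w) \<and> 0 \<le> d" if "z < w" "w < s" for w
        using that s z L_deriv[of w] artanh_le_chord[of w s] by (intro exI) auto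
      show "continuous_on {z..s} L"
        using s z by (auto intro: continuous_on_subset[OF L_cont])
    qed
  next
    case False
    show ?thesis
    proof (rule DERIV_nonpos_imp_decreasing_open[of s z])
      show "\<exists>d. (L has_real_derivative d) (at w) \<and> d \<le> 0" if "s < w" "w < z" for w
        using that s z L_deriv[of w] artanh_ge_chord[of s w] by (intro exI) auto
      show "continuous_on {s..z} L"
        using s z by (auto intro: continuous_on_subset[OF L_cont])
    qed (use False in simp)
  qed
  then show ?thesis
    unfolding L_def .
qed

lemma concave_on_corr_entropy_exp: "concave_on {0..} (\<lambda>u. corr_entropy (exp (- u)))"
proof -
  define K where "K u = corr_entropy (exp (- u))" for u
  have K_deriv: "(K has_real_derivative artanh (exp (- u)) * exp (- u)) (at u)" if "0 < u" for u
  proof -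
    have "-1 < exp (- u)" "exp (- u) < 1"
      using that by (auto intro: order.strict_trans[OF _ exp_gt_zero])
    moreover have "((\<lambda>u. exp (- u)) has_real_derivative - exp (- u)) (at u)"
      by (auto intro!: derivative_eq_intros)
    ultimately have "((\<lambda>u. corr_entropy (exp (- u))) has_real_derivative
        - artanh (exp (- u)) * - exp (- u)) (at u)"
      by (intro DERIV_chain2[OF corr_entropy_has_real_derivative])
    then show ?thesis
      by (simp add: K_def[abs_def])
  qed
  have "concave_on {0<..} K"
    unfolding concave_on_def
  proof (rule convex_on_realI[where f' = "\<lambda>u. - (artanh (exp (- u)) * exp (- u))"])
    show "((\<lambda>u. - K u) has_real_derivative - (artanh (exp (- u)) * exp (- u))) (at u)"
      if "u \<in> {0<..}" for u
      using that K_deriv by (auto intro: DERIV_minus)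
    show "- (artanh (exp (- u)) * exp (- u)) \<le> - (artanh (exp (- v)) * exp (- v))"
      if "u \<in> {0<..}" "v \<in> {0<..}" "u \<le> v" for u v :: real
    proof -
      have "-1 < exp (- v)"
        using order.strict_trans[OF _ exp_gt_zero] by simp
      then have "artanh (exp (- v)) \<le> artanh (exp (- u))" "0 \<le> artanh (exp (- v))"
        using that artanh_mono[of 0 "exp (- v)"] by (auto intro!: artanh_mono)
      then show ?thesis
        using that by (simp add: mult_mono)
    qed
  qed simp
  moreover have "continuous_on {0..} K"
    unfolding K_def[abs_def]
    by (rule continuous_on_compose2[OF continuous_on_corr_entropy])
      (auto intro!: continuous_intros simp: order.trans[OF _ exp_ge_zero])
  ultimately have K_conc: "concave_on {0..y} K" for y
    unfolding concave_on_def
    by (intro concave_on_Icc_if_concave_on_interior[unfolded concave_on_def])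
      (auto elim!: continuous_on_subset convex_on_subset)
  have "concave_on {0..} K"
  proof (rule concave_on_linorderI)
    show "(1 - t) * K x + t * K y \<le> K ((1 - t) *\<^sub>R x + t *\<^sub>R y)"
      if "0 < t" "t < 1" "x \<in> {0..}" "y \<in> {0..}" "x < y" for t x y
      using that concave_onD[OF K_conc[of y], of t x y] by simp
  qed simp
  then show ?thesis
    by (simp add: K_def[abs_def])
qed

lemma corr_entropy_add_le_geometric_mean:
  assumes x: "0 \<le> x" "x \<le> 1" and y: "0 \<le> y" "y \<le> 1"
  shows "corr_entropy x + corr_entropy y \<le> 2 * corr_entropy (sqrt (x * y))"
proof (cases "x = 0 \<or> y = 0")
  case True
  then show ?thesis
    using corr_entropy_le_ln2[of x] corr_entropy_le_ln2[of y] x y by (auto simp: corr_entropy_0)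
next
  case False
  then have pos: "0 < x" "0 < y"
    using x y by auto
  have "(1 - 1/2) * corr_entropy (exp (- (- ln x))) + 1/2 * corr_entropy (exp (- (- ln y)))
      \<le> corr_entropy (exp (- ((1 - 1/2) *\<^sub>R (- ln x) + (1/2) *\<^sub>R (- ln y))))"
    using x y pos by (intro concave_onD[OF concave_on_corr_entropy_exp]) auto
  moreover have "exp (ln t / 2) = sqrt t" if "0 < t" for t
    using that powr_half_sqrt[of t] by (simp add: powr_def)
  then have "exp (- ((1 - 1/2) *\<^sub>R (- ln x) + (1/2) *\<^sub>R (- ln y))) = sqrt (x * y)"
    using pos by (simp add: exp_add real_sqrt_mult add_divide_distrib)
  ultimately show ?thesis
    using pos by simp
qed

lemma bin_entropy_add_le:
  assumes a: "0 < a" "a < 1/2" and \<alpha>: "0 \<le> \<alpha>" "\<alpha> \<le> 1" and \<beta>: "0 \<le> \<beta>" "\<beta> \<le> 1"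
  shows "bin_entropy \<alpha> + bin_entropy \<beta>
    \<le> 2 * bin_entropy a + distortion_multiplier a * (\<alpha> * (1 - \<beta>) + \<beta> * (1 - \<alpha>) - 2 * a * (1 - a))"
proof -
  define s x y where "s = 1 - 2 * a" and "x = 1 - 2 * \<alpha>" and "y = 1 - 2 * \<beta>"
  define \<mu> where "\<mu> = artanh s / s"
  define z where "z = sqrt (\<bar>x\<bar> * \<bar>y\<bar>)"
  have s: "0 < s" "s < 1"
    using a by (simp_all add: s_def)
  have xy: "\<bar>x\<bar> \<le> 1" "\<bar>y\<bar> \<le> 1"
    using \<alpha> \<beta> by (simp_all add: x_def y_def)
  have z: "0 \<le> z" "z \<le> 1" "z^2 = \<bar>x\<bar> * \<bar>y\<bar>"
    using xy by (simp_all add: z_def mult_le_one)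
  have "(1 + s) / (1 - s) = (1 - a) / a"
    using a by (simp add: s_def field_simps)
  then have \<mu>_eq: "\<mu> = distortion_multiplier a / 2"
    using a by (simp add: \<mu>_def s_def artanh_def distortion_multiplier_def ln_div)
  have "0 \<le> \<mu>"
    using s artanh_mono[of 0 s] by (simp add: \<mu>_def)
  then have "\<mu> * (x * y) \<le> \<mu> * z^2"
    using z(3) by (intro mult_left_mono) (simp_all add: abs_mult[symmetric])
  moreover have "bin_entropy \<alpha> + bin_entropy \<beta> = corr_entropy \<bar>x\<bar> + corr_entropy \<bar>y\<bar>"
    unfolding corr_entropy_abs by (simp add: corr_entropy_def x_def y_def)
  moreover have "corr_entropy \<bar>x\<bar> + corr_entropy \<bar>y\<bar> \<le> 2 * corr_entropy z"
    unfolding z_def using xy by (intro corr_entropy_add_le_geometric_mean) auto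
  moreover have "2 * corr_entropy z + \<mu> * z^2 \<le> 2 * corr_entropy s + \<mu> * s^2"
    unfolding \<mu>_def using corr_entropy_quadratic_le[OF s z(1,2)] by simp
  ultimately have "bin_entropy \<alpha> + bin_entropy \<beta> \<le> 2 * corr_entropy s + \<mu> * s^2 - \<mu> * (x * y)"
    by linarith
  also have "\<dots> = 2 * bin_entropy a + distortion_multiplier a * ((s^2 - x * y) / 2)"
    by (simp add: \<mu>_eq corr_entropy_def s_def field_simps)
  also have "(s^2 - x * y) / 2 = \<alpha> * (1 - \<beta>) + \<beta> * (1 - \<alpha>) - 2 * a * (1 - a)"
    by (simp add: s_def x_def y_def field_simps power2_eq_square)
  finally show ?thesis .
qed

section \<open>Entropy and mutual information\<close>

definition shannon_entropy :: "'a set \<Rightarrow> ('a \<Rightarrow> real) \<Rightarrow> real" where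
  "shannon_entropy A f = - (\<Sum>a\<in>A. f a * ln (f a))"

lemma shannon_entropy_bool:
  "f False = 1 - f True \<Longrightarrow> shannon_entropy UNIV f = bin_entropy (f True)"
  by (simp add: shannon_entropy_def bin_entropy_def UNIV_bool)

lemma shannon_entropy_product:
  assumes "finite A" "finite B" and f: "\<And>a. a \<in> A \<Longrightarrow> 0 \<le> f a" and g: "\<And>b. b \<in> B \<Longrightarrow> 0 \<le> g b"
    and "sum f A = 1" "sum g B = 1"
  shows "shannon_entropy (A \<times> B) (\<lambda>(a, b). f a * g b) = shannon_entropy A f + shannon_entropy B g"
proof -
  have "f a * g b * ln (f a * g b) = g b * (f a * ln (f a)) + f a * (g b * ln (g b))"
    if "a \<in> A" "b \<in> B" for a b
    using f[OF that(1)] g[OF that(2)] by (cases "f a = 0 \<or> g b = 0") (auto simp: ln_mult algebra_simps)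
  then have "(\<Sum>(a, b)\<in>A \<times> B. f a * g b * ln (f a * g b))
      = (\<Sum>a\<in>A. \<Sum>b\<in>B. g b * (f a * ln (f a)) + f a * (g b * ln (g b)))"
    by (simp add: sum.cartesian_product[symmetric])
  also have "\<dots> = (\<Sum>a\<in>A. f a * ln (f a)) + (\<Sum>b\<in>B. g b * ln (g b))"
    using assms by (simp add: sum.distrib sum_distrib_left[symmetric] sum_distrib_right[symmetric]
      sum.swap[of _ A B])
  finally show ?thesis
    by (simp add: shannon_entropy_def case_prod_unfold)
qed

lemma mutual_info_nonneg:
  assumes "finite A" "finite B" and nonneg: "\<And>a b. a \<in> A \<Longrightarrow> b \<in> B \<Longrightarrow> 0 \<le> q a b"
    and total: "(\<Sum>a\<in>A. \<Sum>b\<in>B. q a b) = 1"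
  shows "0 \<le> mutual_info A B q"
proof -
  define r c where "r a = (\<Sum>b\<in>B. q a b)" and "c b = (\<Sum>a\<in>A. q a b)" for a b
  \<comment> \<open>Termwise \<open>ln t \<le> t - 1\<close> with \<open>t = r c / q\<close>; the lower bounds sum to \<open>1 - 1\<close>.\<close>
  have term_ge: "(q a b - r a * c b) / ln 2
      \<le> (if q a b > 0 then q a b * log 2 (q a b / (r a * c b)) else 0)"
    if "a \<in> A" "b \<in> B" for a b
  proof (cases "q a b > 0")
    case True
    have "q a b \<le> r a" "q a b \<le> c b"
      unfolding r_def c_def using that assms by (auto intro: member_le_sum)
    with True have pos: "0 < r a * c b"
      by simp
    then have "q a b * ln (r a * c b / q a b) \<le> q a b * (r a * c b / q a b - 1)"
      using True by (intro mult_left_mono ln_le_minus_one) auto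
    moreover have "ln (q a b / (r a * c b)) = - ln (r a * c b / q a b)"
      using True pos by (simp add: ln_div)
    moreover have "q a b * (r a * c b / q a b - 1) = r a * c b - q a b"
      using True by (simp add: field_simps)
    ultimately have "q a b - r a * c b \<le> q a b * ln (q a b / (r a * c b))"
      by simp
    then show ?thesis
      using True by (simp add: log_def divide_right_mono)
  next
    case False
    then have "q a b = 0"
      using nonneg[OF that] by simp
    moreover have "0 \<le> r a * c b"
      unfolding r_def c_def using that nonneg by (intro mult_nonneg_nonneg sum_nonneg) auto
    ultimately show ?thesis
      by (simp add: divide_nonpos_pos)
  qed
  have "(\<Sum>a\<in>A. \<Sum>b\<in>B. r a * c b) = 1"
    using total by (simp add: r_def c_def sum_product[symmetric] sum.swap[of _ A B])
  then have "(\<Sum>a\<in>A. \<Sum>b\<in>B. (q a b - r a * c b) / ln 2) = 0"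
    using total by (simp add: sum_subtractf sum_divide_distrib[symmetric] diff_divide_distrib)
  moreover have "(\<Sum>a\<in>A. \<Sum>b\<in>B. (q a b - r a * c b) / ln 2) \<le> mutual_info A B q"
    unfolding mutual_info_def r_def[symmetric] c_def[symmetric] using term_ge by (intro sum_mono) auto
  ultimately show ?thesis
    by simp
qed

lemma mutual_info_eq_entropy_diff:
  assumes "finite A" "finite B" and nonneg: "\<And>a b. a \<in> A \<Longrightarrow> b \<in> B \<Longrightarrow> 0 \<le> q a b"
  shows "mutual_info A B q = (shannon_entropy B (\<lambda>b. \<Sum>a\<in>A. q a b)
    - (\<Sum>a\<in>A. (\<Sum>b\<in>B. q a b) * shannon_entropy B (\<lambda>b. q a b / (\<Sum>b\<in>B. q a b)))) / ln 2"
proof -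
  define r c where "r a = (\<Sum>b\<in>B. q a b)" and "c b = (\<Sum>a\<in>A. q a b)" for a b
  have "(if q a b > 0 then q a b * log 2 (q a b / (r a * c b)) else 0)
      = (q a b * ln (q a b / r a) - q a b * ln (c b)) / ln 2"
    if "a \<in> A" "b \<in> B" for a b
  proof (cases "q a b > 0")
    case True
    have "q a b \<le> r a" "q a b \<le> c b"
      unfolding r_def c_def using that assms by (auto intro: member_le_sum)
    then show ?thesis
      using True by (simp add: log_def ln_div ln_mult algebra_simps diff_divide_distrib add_divide_distrib)
  qed (use nonneg[OF that] in simp)
  then have "mutual_info A B q
      = ((\<Sum>a\<in>A. \<Sum>b\<in>B. q a b * ln (q a b / r a)) - (\<Sum>a\<in>A. \<Sum>b\<in>B. q a b * ln (c b))) / ln 2"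
    unfolding mutual_info_def r_def[symmetric] c_def[symmetric]
    by (simp add: sum_subtractf sum_divide_distrib[symmetric])
  moreover have "(\<Sum>b\<in>B. q a b * ln (q a b / r a)) = - (r a * shannon_entropy B (\<lambda>b. q a b / r a))"
    if "a \<in> A" for a
  proof (cases "r a = 0")
    case True
    then have "q a b = 0" if "b \<in> B" for b
      using that nonneg \<open>a \<in> A\<close> \<open>finite B\<close> by (simp add: r_def sum_nonneg_eq_0_iff)
    with True show ?thesis
      by simp
  qed (simp add: shannon_entropy_def sum_distrib_left)
  moreover have "(\<Sum>a\<in>A. \<Sum>b\<in>B. q a b * ln (c b)) = - shannon_entropy B c"
    by (simp add: shannon_entropy_def c_def sum.swap[of _ A B] sum_distrib_right)
  moreover have "c = (\<lambda>b. \<Sum>a\<in>A. q a b)"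
    by (simp add: c_def fun_eq_iff)
  ultimately show ?thesis
    by (simp add: r_def sum_negf)
qed

section \<open>Laws of \<open>(U, X, Y)\<close> with \<open>X - U - Y\<close>\<close>

definition law_U :: "(nat \<Rightarrow> 'x::finite \<Rightarrow> 'y::finite \<Rightarrow> real) \<Rightarrow> nat \<Rightarrow> real" where
  "law_U p u = (\<Sum>x\<in>UNIV. \<Sum>y\<in>UNIV. p u x y)"

definition law_X_given_U :: "(nat \<Rightarrow> 'x::finite \<Rightarrow> 'y::finite \<Rightarrow> real) \<Rightarrow> nat \<Rightarrow> 'x \<Rightarrow> real" where
  "law_X_given_U p u x = (\<Sum>y\<in>UNIV. p u x y) / law_U p u"

definition law_Y_given_U :: "(nat \<Rightarrow> 'x::finite \<Rightarrow> 'y::finite \<Rightarrow> real) \<Rightarrow> nat \<Rightarrow> 'y \<Rightarrow> real" where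
  "law_Y_given_U p u y = (\<Sum>x\<in>UNIV. p u x y) / law_U p u"

lemma is_law3_nonneg: "is_law3 p \<Longrightarrow> 0 \<le> p u x y"
  by (simp add: is_law3_def)

lemma law_U_pos:
  assumes "is_law3 p" "u \<in> usupp p"
  shows "0 < law_U p u"
proof -
  obtain x y where "p u x y \<noteq> 0"
    using assms(2) by (auto simp: usupp_def)
  then have "0 < p u x y"
    using is_law3_nonneg[OF assms(1)] by (simp add: order_less_le)
  also have "p u x y \<le> law_U p u"
    unfolding law_U_def using is_law3_nonneg[OF assms(1)]
    by (intro order.trans[OF _ member_le_sum[of x]] member_le_sum sum_nonneg) auto
  finally show ?thesis .
qed

lemma law_X_given_U_nonneg: "is_law3 p \<Longrightarrow> 0 \<le> law_X_given_U p u x"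
  unfolding law_X_given_U_def law_U_def by (auto intro!: divide_nonneg_nonneg sum_nonneg simp: is_law3_nonneg)

lemma law_Y_given_U_nonneg: "is_law3 p \<Longrightarrow> 0 \<le> law_Y_given_U p u y"
  unfolding law_Y_given_U_def law_U_def by (auto intro!: divide_nonneg_nonneg sum_nonneg simp: is_law3_nonneg)

lemma sum_law_X_given_U: "is_law3 p \<Longrightarrow> u \<in> usupp p \<Longrightarrow> (\<Sum>x\<in>UNIV. law_X_given_U p u x) = 1"
  using law_U_pos[of p u] unfolding law_X_given_U_def sum_divide_distrib[symmetric]
  by (simp add: law_U_def[symmetric])

lemma law_U_swap: "law_U p u = (\<Sum>y\<in>UNIV. \<Sum>x\<in>UNIV. p u x y)"
  unfolding law_U_def by (rule sum.swap)

lemma sum_law_Y_given_U: "is_law3 p \<Longrightarrow> u \<in> usupp p \<Longrightarrow> (\<Sum>y\<in>UNIV. law_Y_given_U p u y) = 1"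
  using law_U_pos[of p u] unfolding law_Y_given_U_def sum_divide_distrib[symmetric]
  by (simp add: law_U_swap[symmetric])

lemma markov_factorization:
  assumes "is_law3 p" "markov_XUY p"
  shows "p u x y = law_U p u * law_X_given_U p u x * law_Y_given_U p u y"
proof (cases "u \<in> usupp p")
  case True
  have "p u x y * law_U p u = (\<Sum>y'\<in>UNIV. p u x y') * (\<Sum>x'\<in>UNIV. p u x' y)"
    using assms(2) by (simp add: markov_XUY_def law_U_def)
  moreover have "law_U p u \<noteq> 0"
    using law_U_pos[OF assms(1) True] by simp
  ultimately show ?thesis
    unfolding law_X_given_U_def law_Y_given_U_def
    by (simp add: power2_eq_square[symmetric] power_divide nonzero_eq_divide_eq)
next
  case False
  then have "p u = (\<lambda>x y. 0)"
    by (auto simp: usupp_def)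
  then show ?thesis
    by (simp add: law_U_def)
qed

lemma MI_XU_eq:
  assumes "is_law3 p"
  shows "MI_XU p = (shannon_entropy UNIV (marg_X p)
    - (\<Sum>u\<in>usupp p. law_U p u * shannon_entropy UNIV (law_X_given_U p u))) / ln 2"
proof -
  have "marg_X p = (\<lambda>x. \<Sum>u\<in>usupp p. \<Sum>y\<in>UNIV. p u x y)"
    "law_X_given_U p u = (\<lambda>x. (\<Sum>y\<in>UNIV. p u x y) / (\<Sum>x\<in>UNIV. \<Sum>y\<in>UNIV. p u x y))" for u
    by (simp_all add: marg_X_def law_X_given_U_def law_U_def fun_eq_iff)
  moreover have "MI_XU p = (shannon_entropy UNIV (\<lambda>x. \<Sum>u\<in>usupp p. \<Sum>y\<in>UNIV. p u x y)
      - (\<Sum>u\<in>usupp p. (\<Sum>x\<in>UNIV. \<Sum>y\<in>UNIV. p u x y)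
          * shannon_entropy UNIV (\<lambda>x. (\<Sum>y\<in>UNIV. p u x y) / (\<Sum>x\<in>UNIV. \<Sum>y\<in>UNIV. p u x y)))) / ln 2"
    unfolding MI_XU_def using assms
    by (intro mutual_info_eq_entropy_diff) (auto simp: is_law3_def intro!: sum_nonneg)
  ultimately show ?thesis
    by (simp only: law_U_def)
qed

lemma MI_XU_nonneg: "is_law3 p \<Longrightarrow> 0 \<le> MI_XU p"
  unfolding MI_XU_def is_law3_def by (intro mutual_info_nonneg) (auto intro: sum_nonneg)

lemma MI_YU_eq:
  assumes "is_law3 p"
  shows "MI_YU p = (shannon_entropy UNIV (marg_Y p)
    - (\<Sum>u\<in>usupp p. law_U p u * shannon_entropy UNIV (law_Y_given_U p u))) / ln 2"
proof -
  have "marg_Y p = (\<lambda>y. \<Sum>u\<in>usupp p. \<Sum>x\<in>UNIV. p u x y)"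
    "law_Y_given_U p u = (\<lambda>y. (\<Sum>x\<in>UNIV. p u x y) / (\<Sum>y\<in>UNIV. \<Sum>x\<in>UNIV. p u x y))" for u
    by (simp_all add: marg_Y_def law_Y_given_U_def law_U_swap fun_eq_iff)
  moreover have "MI_YU p = (shannon_entropy UNIV (\<lambda>y. \<Sum>u\<in>usupp p. \<Sum>x\<in>UNIV. p u x y)
      - (\<Sum>u\<in>usupp p. (\<Sum>y\<in>UNIV. \<Sum>x\<in>UNIV. p u x y)
          * shannon_entropy UNIV (\<lambda>y. (\<Sum>x\<in>UNIV. p u x y) / (\<Sum>y\<in>UNIV. \<Sum>x\<in>UNIV. p u x y)))) / ln 2"
    unfolding MI_YU_def using assms
    by (intro mutual_info_eq_entropy_diff) (auto simp: is_law3_def intro!: sum_nonneg)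
  ultimately show ?thesis
    by (simp only: law_U_swap)
qed

text \<open>For \<open>X - U - Y\<close> the conditional entropy \<open>H(X, Y | U)\<close> splits as \<open>H(X | U) + H(Y | U)\<close>.\<close>
lemma MI_XYU_markov_eq:
  assumes "is_law3 p" "markov_XUY p"
  shows "MI_XYU p = (shannon_entropy UNIV (\<lambda>(x, y). marg_XY p x y)
    - (\<Sum>u\<in>usupp p. law_U p u * (shannon_entropy UNIV (law_X_given_U p u)
        + shannon_entropy UNIV (law_Y_given_U p u)))) / ln 2"
proof -
  have weight: "(\<Sum>b\<in>UNIV. case b of (x, y) \<Rightarrow> p u x y) = law_U p u" for u
    by (simp add: law_U_def UNIV_Times_UNIV[symmetric] sum.cartesian_product del: UNIV_Times_UNIV)
  have marg: "(\<lambda>b. \<Sum>u\<in>usupp p. case b of (x, y) \<Rightarrow> p u x y) = (\<lambda>(x, y). marg_XY p x y)"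
    by (auto simp: marg_XY_def fun_eq_iff)
  have cond: "shannon_entropy UNIV (\<lambda>b. (case b of (x, y) \<Rightarrow> p u x y) / law_U p u)
      = shannon_entropy UNIV (law_X_given_U p u) + shannon_entropy UNIV (law_Y_given_U p u)"
    if "u \<in> usupp p" for u
  proof -
    have "(\<lambda>b. (case b of (x, y) \<Rightarrow> p u x y) / law_U p u)
        = (\<lambda>(x, y). law_X_given_U p u x * law_Y_given_U p u y)"
      using law_U_pos[OF assms(1) that] markov_factorization[OF assms, of u]
      by (auto simp: fun_eq_iff)
    then show ?thesis
      using assms(1) that
      by (simp add: UNIV_Times_UNIV[symmetric] shannon_entropy_product law_X_given_U_nonneg
          law_Y_given_U_nonneg sum_law_X_given_U sum_law_Y_given_U del: UNIV_Times_UNIV)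
  qed
  have "MI_XYU p = (shannon_entropy UNIV (\<lambda>b. \<Sum>u\<in>usupp p. case b of (x, y) \<Rightarrow> p u x y)
      - (\<Sum>u\<in>usupp p. (\<Sum>b\<in>UNIV. case b of (x, y) \<Rightarrow> p u x y)
          * shannon_entropy UNIV (\<lambda>b. (case b of (x, y) \<Rightarrow> p u x y)
              / (\<Sum>b\<in>UNIV. case b of (x, y) \<Rightarrow> p u x y)))) / ln 2"
    unfolding MI_XYU_def using assms(1)
    by (intro mutual_info_eq_entropy_diff) (auto simp: is_law3_def)
  also have "\<dots> = (shannon_entropy UNIV (\<lambda>(x, y). marg_XY p x y)
    - (\<Sum>u\<in>usupp p. law_U p u * (shannon_entropy UNIV (law_X_given_U p u)
        + shannon_entropy UNIV (law_Y_given_U p u)))) / ln 2"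
    unfolding weight marg using cond by (simp cong: sum.cong)
  finally show ?thesis .
qed

section \<open>Fair bits under Hamming distortion\<close>

abbreviation fair_coin :: "bool \<Rightarrow> real" where
  "fair_coin \<equiv> \<lambda>_. 1/2"

abbreviation hamming :: "bool \<Rightarrow> bool \<Rightarrow> real" where
  "hamming \<equiv> \<lambda>x y. if x \<noteq> y then 1 else 0"

lemma sum_UNIV_bool: "(\<Sum>x\<in>UNIV. f x) = f True + f False"
  by (simp add: UNIV_bool add.commute)

lemma exp_dist_hamming: "exp_dist hamming P = P True False + P False True"
  by (simp add: exp_dist_def sum_UNIV_bool)

lemma fair_coupling_eq:
  assumes "coupling fair_coin fair_coin P"
  shows "P x y = (if x = y then 1 - exp_dist hamming P else exp_dist hamming P) / 2"
proof -
  have "P True True + P True False = 1/2" "P False True + P False False = 1/2"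
    "P True True + P False True = 1/2" "P True False + P False False = 1/2"
    using assms by (simp_all add: coupling_def sum_UNIV_bool)
  then show ?thesis
    unfolding exp_dist_hamming by (cases x; cases y; simp; linarith)
qed

lemma fair_coupling_distortion:
  assumes "coupling fair_coin fair_coin P"
  shows "0 \<le> exp_dist hamming P" "exp_dist hamming P \<le> 1"
proof -
  have "0 \<le> P True True" "0 \<le> P True False" "0 \<le> P False True"
    using assms by (simp_all add: coupling_def)
  then show "0 \<le> exp_dist hamming P" "exp_dist hamming P \<le> 1"
    using fair_coupling_eq[OF assms, of True True] unfolding exp_dist_hamming by simp_all
qed

lemma shannon_entropy_fair_coupling:
  assumes "coupling fair_coin fair_coin P"
  shows "shannon_entropy UNIV (\<lambda>(x, y). P x y) = ln 2 + bin_entropy (exp_dist hamming P)"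
proof -
  define d where "d = exp_dist hamming P"
  have P: "P x y = (if x = y then 1 - d else d) / 2" for x y
    unfolding d_def by (rule fair_coupling_eq[OF assms])
  have d: "0 \<le> d" "d \<le> 1"
    unfolding d_def using fair_coupling_distortion[OF assms] by auto
  have half: "t / 2 * ln (t / 2) = (t * ln t - t * ln 2) / 2" if "0 \<le> t" for t :: real
    using that by (cases "t = 0") (auto simp: ln_div algebra_simps)
  have "shannon_entropy UNIV (\<lambda>(x, y). P x y) = - (\<Sum>x\<in>UNIV. \<Sum>y\<in>UNIV. P x y * ln (P x y))"
    by (simp add: shannon_entropy_def UNIV_Times_UNIV[symmetric] sum.cartesian_product
        case_prod_unfold del: UNIV_Times_UNIV)
  also have "\<dots> = - (2 * ((1 - d) / 2 * ln ((1 - d) / 2)) + 2 * (d / 2 * ln (d / 2)))"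
    by (simp add: P sum_UNIV_bool)
  also have "\<dots> = ln 2 + bin_entropy d"
    using half[of "1 - d"] half[of d] d by (simp only:) (simp add: bin_entropy_def field_simps)
  finally show ?thesis
    by (simp add: d_def)
qed

lemma cond_entropy_bool_le:
  fixes p :: "nat \<Rightarrow> bool \<Rightarrow> bool \<Rightarrow> real"
  assumes a: "0 < a" "a < 1/2" and law: "is_law3 p" "markov_XUY p" and u: "u \<in> usupp p"
  shows "law_U p u * (shannon_entropy UNIV (law_X_given_U p u) + shannon_entropy UNIV (law_Y_given_U p u))
    \<le> law_U p u * (2 * bin_entropy a - distortion_multiplier a * (2 * a * (1 - a)))
      + distortion_multiplier a * (p u True False + p u False True)"
proof -
  define \<alpha> \<beta> where "\<alpha> = law_X_given_U p u True" and "\<beta> = law_Y_given_U p u True"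
  have X_False: "law_X_given_U p u False = 1 - \<alpha>" and Y_False: "law_Y_given_U p u False = 1 - \<beta>"
    using sum_law_X_given_U[OF law(1) u] sum_law_Y_given_U[OF law(1) u]
    by (simp_all add: \<alpha>_def \<beta>_def sum_UNIV_bool)
  have range: "0 \<le> \<alpha>" "\<alpha> \<le> 1" "0 \<le> \<beta>" "\<beta> \<le> 1"
    using X_False Y_False law_X_given_U_nonneg[OF law(1), of u] law_Y_given_U_nonneg[OF law(1), of u]
    by (auto simp: \<alpha>_def \<beta>_def) (metis diff_ge_0_iff_ge)+
  have mismatch: "law_U p u * (\<alpha> * (1 - \<beta>) + \<beta> * (1 - \<alpha>)) = p u True False + p u False True"
    using markov_factorization[OF law, of u True False] markov_factorization[OF law, of u False True]
    by (simp add: \<alpha>_def \<beta>_def X_False Y_False algebra_simps)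
  have "law_U p u * (shannon_entropy UNIV (law_X_given_U p u) + shannon_entropy UNIV (law_Y_given_U p u))
      = law_U p u * (bin_entropy \<alpha> + bin_entropy \<beta>)"
    using X_False Y_False by (simp add: shannon_entropy_bool \<alpha>_def[symmetric] \<beta>_def[symmetric])
  also have "\<dots> \<le> law_U p u * (2 * bin_entropy a
      + distortion_multiplier a * (\<alpha> * (1 - \<beta>) + \<beta> * (1 - \<alpha>) - 2 * a * (1 - a)))"
    using law_U_pos[OF law(1) u] range by (intro mult_left_mono bin_entropy_add_le a) auto
  also have "\<dots> = law_U p u * (2 * bin_entropy a - distortion_multiplier a * (2 * a * (1 - a)))
      + distortion_multiplier a * (law_U p u * (\<alpha> * (1 - \<beta>) + \<beta> * (1 - \<alpha>)))"
    by (simp add: algebra_simps)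
  finally show ?thesis
    unfolding mismatch .
qed

definition common_info_bound :: "real \<Rightarrow> real" where
  "common_info_bound a = (ln 2 + min (distortion_multiplier a * (2 * a * (1 - a)))
    (bin_entropy (2 * a * (1 - a))) - 2 * bin_entropy a) / ln 2"

lemma MI_XYU_fair_coupling_ge:
  fixes p :: "nat \<Rightarrow> bool \<Rightarrow> bool \<Rightarrow> real"
  assumes a: "0 < a" "a < 1/2" and law: "is_law3 p" "markov_XUY p"
    and cpl: "coupling fair_coin fair_coin (marg_XY p)"
    and dist: "exp_dist hamming (marg_XY p) \<le> 2 * a * (1 - a)"
  shows "common_info_bound a \<le> MI_XYU p"
proof -
  define D d m where "D = 2 * a * (1 - a)" and "d = exp_dist hamming (marg_XY p)"
    and "m = distortion_multiplier a"
  have D: "D \<le> 1"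
    using a mult_le_one[of "2 * a" "1 - a"] by (simp add: D_def)
  have "(\<Sum>u\<in>usupp p. law_U p u) = 1"
    using law(1) by (simp add: is_law3_def law_U_def)
  moreover have "(\<Sum>u\<in>usupp p. p u True False + p u False True) = d"
    unfolding d_def exp_dist_hamming by (simp add: marg_XY_def sum.distrib)
  ultimately have "(\<Sum>u\<in>usupp p. law_U p u * (shannon_entropy UNIV (law_X_given_U p u)
        + shannon_entropy UNIV (law_Y_given_U p u)))
      \<le> (\<Sum>u\<in>usupp p. law_U p u * (2 * bin_entropy a - m * D) + m * (p u True False + p u False True))"
    unfolding D_def m_def by (intro sum_mono cond_entropy_bool_le a law)
  also have "\<dots> = (\<Sum>u\<in>usupp p. law_U p u) * (2 * bin_entropy a - m * D)
      + m * (\<Sum>u\<in>usupp p. p u True False + p u False True)"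
    by (simp add: sum.distrib sum_distrib_left[symmetric] sum_distrib_right)
  also have "\<dots> = 2 * bin_entropy a + m * (d - D)"
    using \<open>(\<Sum>u\<in>usupp p. law_U p u) = 1\<close> \<open>(\<Sum>u\<in>usupp p. _) = d\<close>
    by (simp add: algebra_simps)
  finally have sum_le: "(\<Sum>u\<in>usupp p. law_U p u * (shannon_entropy UNIV (law_X_given_U p u)
      + shannon_entropy UNIV (law_Y_given_U p u))) \<le> 2 * bin_entropy a + m * (d - D)" .
  have "MI_XYU p * ln 2 = ln 2 + bin_entropy d - (\<Sum>u\<in>usupp p. law_U p u
      * (shannon_entropy UNIV (law_X_given_U p u) + shannon_entropy UNIV (law_Y_given_U p u)))"
    unfolding MI_XYU_markov_eq[OF law] shannon_entropy_fair_coupling[OF cpl] d_def[symmetric] by simp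
  then have "ln 2 + bin_entropy d + m * (D - d) - 2 * bin_entropy a \<le> MI_XYU p * ln 2"
    using sum_le by (simp add: algebra_simps)
  moreover have "min (m * D) (bin_entropy D) \<le> bin_entropy d + m * (D - d)"
    using fair_coupling_distortion[OF cpl] dist D by (intro bin_entropy_add_linear_ge_min) (auto simp: d_def D_def)
  ultimately show ?thesis
    by (simp add: common_info_bound_def D_def m_def divide_right_mono pos_divide_le_eq)
qed

text \<open>\<open>U\<close> is a fair bit in \<open>{0, 1}\<close>, observed independently by \<open>X\<close> and \<open>Y\<close> through a binary
  symmetric channel with crossover probability \<open>a\<close>.\<close>
definition bsc :: "real \<Rightarrow> nat \<Rightarrow> bool \<Rightarrow> real" where
  "bsc a u x = (if x = (u = 1) then 1 - a else a)"

definition bsc_law :: "real \<Rightarrow> nat \<Rightarrow> bool \<Rightarrow> bool \<Rightarrow> real" where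
  "bsc_law a u x y = (if u \<le> 1 then bsc a u x * bsc a u y / 2 else 0)"

lemma sum_bsc: "(\<Sum>x\<in>UNIV. bsc a u x) = 1"
  by (simp add: bsc_def sum_UNIV_bool)

lemma usupp_bsc_law:
  assumes "0 < a" "a < 1"
  shows "usupp (bsc_law a) = {0, 1}"
  using assms by (auto simp: usupp_def bsc_law_def bsc_def split: if_splits)

lemma law_U_bsc_law: "u \<le> 1 \<Longrightarrow> law_U (bsc_law a) u = 1/2"
  by (simp add: law_U_def bsc_law_def sum_divide_distrib[symmetric] sum_distrib_left[symmetric]
      sum_distrib_right[symmetric] sum_bsc)

lemma law_X_given_U_bsc_law: "u \<le> 1 \<Longrightarrow> law_X_given_U (bsc_law a) u = bsc a u"
  by (simp add: law_X_given_U_def law_U_bsc_law fun_eq_iff bsc_law_def sum_divide_distrib[symmetric]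
      sum_distrib_left[symmetric] sum_bsc)

lemma law_Y_given_U_bsc_law: "u \<le> 1 \<Longrightarrow> law_Y_given_U (bsc_law a) u = bsc a u"
  by (simp add: law_Y_given_U_def law_U_bsc_law fun_eq_iff bsc_law_def sum_divide_distrib[symmetric]
      sum_distrib_right[symmetric] sum_bsc)

lemma marg_XY_bsc_law:
  assumes "0 < a" "a < 1"
  shows "marg_XY (bsc_law a) x y = (bsc a 0 x * bsc a 0 y + bsc a 1 x * bsc a 1 y) / 2"
  by (simp add: marg_XY_def usupp_bsc_law[OF assms] bsc_law_def add_divide_distrib)

lemma bsc_law_is_law3:
  assumes "0 < a" "a < 1"
  shows "is_law3 (bsc_law a)"
proof -
  have "(\<Sum>u\<in>usupp (bsc_law a). \<Sum>x\<in>UNIV. \<Sum>y\<in>UNIV. bsc_law a u x y)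
      = law_U (bsc_law a) 0 + law_U (bsc_law a) 1"
    by (simp add: usupp_bsc_law[OF assms] law_U_def)
  then show ?thesis
    using assms by (auto simp: is_law3_def usupp_bsc_law law_U_bsc_law bsc_law_def bsc_def)
qed

lemma bsc_law_markov: "markov_XUY (bsc_law a)"
  by (simp add: markov_XUY_def bsc_law_def sum_divide_distrib[symmetric] sum_distrib_left[symmetric]
      sum_distrib_right[symmetric] sum_bsc)

lemma bsc_law_coupling:
  assumes "0 < a" "a < 1"
  shows "coupling fair_coin fair_coin (marg_XY (bsc_law a))"
  using assms by (auto simp: coupling_def marg_XY_bsc_law sum_UNIV_bool bsc_def field_simps)

lemma exp_dist_bsc_law:
  assumes "0 < a" "a < 1"
  shows "exp_dist hamming (marg_XY (bsc_law a)) = 2 * a * (1 - a)"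
  unfolding exp_dist_hamming by (simp add: marg_XY_bsc_law[OF assms] bsc_def field_simps)

lemma shannon_entropy_bsc: "shannon_entropy UNIV (bsc a u) = bin_entropy a"
  by (subst shannon_entropy_bool) (auto simp: bsc_def bin_entropy_one_minus)

lemma MI_XU_bsc_law:
  assumes "0 < a" "a < 1"
  shows "MI_XU (bsc_law a) = (ln 2 - bin_entropy a) / ln 2"
proof -
  have "marg_X (bsc_law a) = fair_coin"
    by (auto simp: fun_eq_iff marg_X_def usupp_bsc_law[OF assms] bsc_law_def sum_UNIV_bool
        bsc_def field_simps)
  then show ?thesis
    using assms
    by (simp add: MI_XU_eq bsc_law_is_law3 usupp_bsc_law law_U_bsc_law law_X_given_U_bsc_law
        shannon_entropy_bsc shannon_entropy_bool bin_entropy_half)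
qed

lemma MI_YU_bsc_law:
  assumes "0 < a" "a < 1"
  shows "MI_YU (bsc_law a) = (ln 2 - bin_entropy a) / ln 2"
proof -
  have "marg_Y (bsc_law a) = fair_coin"
    by (auto simp: fun_eq_iff marg_Y_def usupp_bsc_law[OF assms] bsc_law_def sum_UNIV_bool
        bsc_def field_simps)
  then show ?thesis
    using assms
    by (simp add: MI_YU_eq bsc_law_is_law3 usupp_bsc_law law_U_bsc_law law_Y_given_U_bsc_law
        shannon_entropy_bsc shannon_entropy_bool bin_entropy_half)
qed

lemma I0_fair_hamming_le:
  assumes "0 < a" "a < 1/2" "2 * a * (1 - a) \<le> D"
  shows "I0 fair_coin fair_coin hamming D \<le> (ln 2 - bin_entropy a) / ln 2"
proof -
  define S where "S = {max (MI_XU p) (MI_YU p) | p :: nat \<Rightarrow> bool \<Rightarrow> bool \<Rightarrow> real. is_law3 p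
      \<and> coupling fair_coin fair_coin (marg_XY p) \<and> exp_dist hamming (marg_XY p) \<le> D
      \<and> markov_XUY p \<and> card (usupp p) \<le> card (UNIV :: bool set) + card (UNIV :: bool set) + 1}"
  have "(ln 2 - bin_entropy a) / ln 2 \<in> S"
    unfolding S_def using assms exp_dist_bsc_law[of a]
    by (intro CollectI exI[of _ "bsc_law a"])
      (simp add: MI_XU_bsc_law MI_YU_bsc_law bsc_law_is_law3 bsc_law_coupling bsc_law_markov
        usupp_bsc_law)
  moreover have "bdd_below S"
    unfolding S_def by (rule bdd_belowI[of _ 0]) (auto simp: max.coboundedI1 MI_XU_nonneg)
  ultimately show ?thesis
    unfolding I0_def S_def[symmetric] by (rule cInf_lower)
qed

text \<open>Taking \<open>U = X\<close> realizes any joint law with \<open>X - U - Y\<close>, so the infimum defining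
  \<open>wyner_CI\<close> is over a nonempty set.\<close>
definition copy_X_law :: "(bool \<Rightarrow> bool \<Rightarrow> real) \<Rightarrow> nat \<Rightarrow> bool \<Rightarrow> bool \<Rightarrow> real" where
  "copy_X_law P u x y = (if u = of_bool x then P x y else 0)"

lemma copy_X_law:
  assumes "coupling fair_coin fair_coin P"
  shows "is_law3 (copy_X_law P)" "marg_XY (copy_X_law P) = P" "markov_XUY (copy_X_law P)"
proof -
  have rows: "P True True + P True False = 1/2" "P False True + P False False = 1/2"
    using assms by (simp_all add: coupling_def sum_UNIV_bool)
  have "u \<in> {0, 1}" if u: "u \<in> usupp (copy_X_law P)" for u
  proof -
    obtain x y where "copy_X_law P u x y \<noteq> 0"
      using u unfolding usupp_def by blast
    then have "u = of_bool x"
      by (simp add: copy_X_law_def split: if_splits)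
    then show ?thesis
      by (cases x) simp_all
  qed
  moreover have "0 \<in> usupp (copy_X_law P)" "1 \<in> usupp (copy_X_law P)"
  proof -
    have "copy_X_law P 0 False = P False" "copy_X_law P 1 True = P True"
      by (simp_all add: copy_X_law_def fun_eq_iff)
    then show "0 \<in> usupp (copy_X_law P)" "1 \<in> usupp (copy_X_law P)"
      using rows unfolding usupp_def mem_Collect_eq
      by (metis add.right_neutral zero_neq_numeral divide_eq_0_iff one_neq_zero)+
  qed
  ultimately have supp: "usupp (copy_X_law P) = {0, 1}"
    by blast
  have "(\<Sum>u\<in>{0, 1}. \<Sum>x\<in>UNIV. \<Sum>y\<in>UNIV. copy_X_law P u x y) = 1"
    using rows by (simp add: copy_X_law_def sum_UNIV_bool)
  then show "is_law3 (copy_X_law P)"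
    using assms by (simp add: is_law3_def supp copy_X_law_def coupling_def)
  show "marg_XY (copy_X_law P) = P"
    by (simp add: marg_XY_def supp copy_X_law_def fun_eq_iff)
  show "markov_XUY (copy_X_law P)"
    unfolding markov_XUY_def copy_X_law_def sum_UNIV_bool by (auto simp: algebra_simps)
qed

lemma wyner_CI_fair_coupling_ge:
  assumes "0 < a" "a < 1/2" and "coupling fair_coin fair_coin P" "exp_dist hamming P \<le> 2 * a * (1 - a)"
  shows "common_info_bound a \<le> wyner_CI P"
  unfolding wyner_CI_def
proof (rule cInf_greatest)
  show "{MI_XYU p | p. is_law3 p \<and> marg_XY p = P \<and> markov_XUY p} \<noteq> {}"
    using copy_X_law[OF assms(3)] by blast
qed (use assms in \<open>auto intro: MI_XYU_fair_coupling_ge\<close>)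

lemma C0_fair_hamming_ge:
  assumes "0 < a" "a < 1/2" "0 \<le> D" "D \<le> 2 * a * (1 - a)"
  shows "common_info_bound a \<le> C0 fair_coin fair_coin hamming D"
  unfolding C0_def
proof (rule cInf_greatest)
  let ?diag = "\<lambda>x y :: bool. if x = y then 1/2 else 0 :: real"
  have "coupling fair_coin fair_coin ?diag" "exp_dist hamming ?diag = 0"
    by (simp_all add: coupling_def exp_dist_def sum_UNIV_bool)
  then have "wyner_CI ?diag \<in> {wyner_CI P | P. coupling fair_coin fair_coin P \<and> exp_dist hamming P \<le> D}"
    using assms(3) by (intro CollectI exI[of _ ?diag]) simp
  then show "{wyner_CI P | P. coupling fair_coin fair_coin P \<and> exp_dist hamming P \<le> D} \<noteq> {}"
    by blast
  fix z assume "z \<in> {wyner_CI P | P. coupling fair_coin fair_coin P \<and> exp_dist hamming P \<le> D}"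
  then obtain P where "z = wyner_CI P" "coupling fair_coin fair_coin P" "exp_dist hamming P \<le> D"
    by blast
  then show "common_info_bound a \<le> z"
    using assms by (auto intro!: wyner_CI_fair_coupling_ge)
qed

theorem mainTheorem7:
  fixes D :: real
  assumes "0 < D" and "D < 1/2"
  shows "I0 (\<lambda>x::bool. 1/2) (\<lambda>y::bool. 1/2) (\<lambda>x y. if x \<noteq> y then 1 else 0) D
         < C0 (\<lambda>x::bool. 1/2) (\<lambda>y::bool. 1/2) (\<lambda>x y. if x \<noteq> y then 1 else 0) D"
proof -
  \<comment> \<open>The crossover probability of the test channel, solving \<open>2a(1 - a) = D\<close>.\<close>
  define a where "a = (1 - sqrt (1 - 2 * D)) / 2"
  have a: "0 < a" "a < 1/2"
    using assms by (simp_all add: a_def)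
  have D: "2 * a * (1 - a) = D"
    using assms by (simp add: a_def field_simps power2_eq_square[symmetric])
  have "I0 fair_coin fair_coin hamming D \<le> (ln 2 - bin_entropy a) / ln 2"
    using a D by (intro I0_fair_hamming_le) auto
  also have "\<dots> < common_info_bound a"
    using bin_entropy_lt_distortion_multiplier[OF a] bin_entropy_lt_distortion[OF a]
    unfolding common_info_bound_def by (intro divide_strict_right_mono) auto
  also have "\<dots> \<le> C0 fair_coin fair_coin hamming D"
    using a D assms by (intro C0_fair_hamming_ge) auto
  finally show ?thesis .
qed

end
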